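(* Let $s\in(0,1)$, $0<\iota<\min\{s,1/3\}$, let $\omega$ satisfy condition (M) with parameter $\iota$, and let $C>0$. Then there exist $t_0>0$ and a function $\zeta:[0,\infty)\to[0,\infty)$ with $\zeta\in C([0,\infty))\cap C^2((0,\infty))\cap C^3((0,2))$ satisfying (Z0), (Z1), (Z2), (Z3), (Z4) and $$C\big(t^s+\omega(t)\big)\le t\zeta'(t)\quad\text{for all }0<t<t_0.$$
   Context: Condition (M) with parameter $\iota$: $\omega:[0,\infty)\to[0,\infty)$ is continuous, increasing and concave, $C^2$ on $(0,\infty)$, $\omega(0)=0$, $\int_0^1\omega(t)/t\,dt<\infty$, and there is $t_0>0$ with $\omega(t)/t^\iota$ decreasing on $(0,t_0)$ and $t^2\omega''(t)\ge-\omega(t)-3t\omega'(t)$ on $(0,t_0)$. (Z0): $\zeta$ positive on $(0,\infty)$, increasing, concave, $\zeta(0)=0$. (Z1): there are $c_1>0$, $t_0\in(0,1)$ with $t^2\zeta'''(t)\ge-c_1\zeta'(t)$ for $0<t<t_0$. (Z2): $t\mapsto t\zeta'(t)$ nondecreasing on $(0,\infty)$. (Z3): there are $\iota>0$, $t_0>0$ such that $\zeta(t)/t^\iota$ is decreasing on $(0,t_0]$. (Z4): there is $c_2>0$ with $\zeta(t)\le c_2(1+t)^{s/2}$ for $t\ge0$. *)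

theory Defs
  imports "HOL-Analysis.Analysis"
begin

definition Ck_on :: "nat \<Rightarrow> (real \<Rightarrow> real) \<Rightarrow> real set \<Rightarrow> bool" where
  "Ck_on k f S \<longleftrightarrow>
     (\<forall>j<k. \<forall>x\<in>S. ((deriv ^^ j) f has_real_derivative (deriv ^^ Suc j) f x) (at x))
     \<and> continuous_on S ((deriv ^^ k) f)"

definition cond_M :: "real \<Rightarrow> (real \<Rightarrow> real) \<Rightarrow> bool" where
  "cond_M \<iota> \<omega> \<longleftrightarrow>
     (\<forall>t\<ge>0. \<omega> t \<ge> 0) \<and>
     continuous_on {0..} \<omega> \<and>
     mono_on {0..} \<omega> \<and>
     concave_on {0..} \<omega> \<and>
     Ck_on 2 \<omega> {0<..} \<and>
     \<omega> 0 = 0 \<and>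
     (\<lambda>t. \<omega> t / t) integrable_on {0..1} \<and>
     (\<exists>t0>0. antimono_on {0<..<t0} (\<lambda>t. \<omega> t / t powr \<iota>) \<and>
        (\<forall>t\<in>{0<..<t0}. t\<^sup>2 * deriv (deriv \<omega>) t \<ge> - \<omega> t - 3 * t * deriv \<omega> t))"

end

theory Submission imports Defs begin

text \<open>Take \<open>\<rho>(t) = 2C(t\<^sup>s + \<omega>(t))\<close> and \<open>\<zeta>(t) = \<integral>\<^sub>0\<^sup>t \<rho>(u) / ((1 + \<rho>(u)) u) du\<close>,
  so that \<open>t \<zeta>'(t) = \<rho>(t) / (1 + \<rho>(t))\<close>. This quantity is nondecreasing (Z2), at least
  \<open>\<rho>(t)/2 = C(t\<^sup>s + \<omega>(t))\<close> while \<open>\<rho> \<le> 1\<close>, and at most 1, so \<open>\<zeta>\<close> grows like a logarithm (Z4).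
  Concavity of \<open>\<zeta>\<close> comes from \<open>0 \<le> t \<rho>' \<le> \<rho>\<close>, and (Z1) from \<open>t\<^sup>2 \<rho>'' \<ge> -4\<rho>\<close> near 0; for \<open>\<omega>\<close>
  both follow from (M) and the tangent inequality \<open>t \<omega>'(t) \<le> \<omega>(t)\<close> of the concave \<open>\<omega>\<close> with
  \<open>\<omega>(0) = 0\<close>. As \<open>\<zeta>\<close> is concave with \<open>\<zeta>(0) = 0\<close>, (Z3) holds with exponent 1.\<close>

lemma Ck_on_subset: "Ck_on k f S \<Longrightarrow> T \<subseteq> S \<Longrightarrow> Ck_on k f T"
  unfolding Ck_on_def by (meson continuous_on_subset subsetD)

lemma Ck_on_Suc_imp_Ck_on:
  assumes "Ck_on (Suc k) f S"
  shows "Ck_on k f S"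
proof -
  have "\<forall>x\<in>S. isCont ((deriv ^^ k) f) x"
    using assms unfolding Ck_on_def by (meson DERIV_isCont lessI)
  then show ?thesis
    using assms unfolding Ck_on_def by (simp add: continuous_at_imp_continuous_on)
qed

lemma
  fixes F :: "nat \<Rightarrow> real \<Rightarrow> real"
  assumes S: "open S" and F0: "F 0 = f"
    and F_deriv: "\<And>j x. j < k \<Longrightarrow> x \<in> S \<Longrightarrow> (F j has_real_derivative F (Suc j) x) (at x)"
    and F_cont: "continuous_on S (F k)"
  shows Ck_onI_derivatives: "Ck_on k f S"
    and deriv_funpow_eq_derivatives: "\<And>j x. j \<le> k \<Longrightarrow> x \<in> S \<Longrightarrow> (deriv ^^ j) f x = F j x"
proof -
  have has_deriv: "((deriv ^^ j) f has_real_derivative F (Suc j) x) (at x)"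
    if "j < k" "x \<in> S" "\<And>y. y \<in> S \<Longrightarrow> (deriv ^^ j) f y = F j y" for j x
    using has_field_derivative_transform_within_open[OF F_deriv[OF that(1,2)] S that(2)] that(3)
    by simp
  show eq: "(deriv ^^ j) f x = F j x" if "j \<le> k" "x \<in> S" for j x
    using that
  proof (induction j arbitrary: x)
    case 0
    then show ?case by (simp add: F0)
  next
    case (Suc j)
    then show ?case by (simp add: DERIV_imp_deriv has_deriv)
  qed
  show "Ck_on k f S"
    unfolding Ck_on_def
  proof (intro conjI allI impI ballI)
    fix j x assume "j < k" "x \<in> S"
    then show "((deriv ^^ j) f has_real_derivative (deriv ^^ Suc j) f x) (at x)"
      using has_deriv[of j x] eq[of j] eq[of "Suc j" x] by simp
  next
    show "continuous_on S ((deriv ^^ k) f)"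
      by (rule continuous_on_eq[OF F_cont]) (simp add: eq)
  qed
qed

lemma mono_on_Ici_if_deriv_nonneg:
  fixes f f' :: "real \<Rightarrow> real"
  assumes cont: "continuous_on {a..} f"
    and deriv: "\<And>x. a < x \<Longrightarrow> (f has_real_derivative f' x) (at x)"
    and nonneg: "\<And>x. a < x \<Longrightarrow> 0 \<le> f' x"
  shows "mono_on {a..} f"
proof (rule mono_onI)
  fix x y :: real
  assume xy: "x \<in> {a..}" "y \<in> {a..}" "x \<le> y"
  show "f x \<le> f y"
  proof (rule DERIV_nonneg_imp_increasing_open[OF \<open>x \<le> y\<close>])
    show "continuous_on {x..y} f" using continuous_on_subset[OF cont] xy by auto
    fix u assume "x < u" "u < y"
    then have "a < u" using xy by simp
    then show "\<exists>d. (f has_real_derivative d) (at u) \<and> 0 \<le> d"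
      using deriv nonneg by blast
  qed
qed

lemma concave_on_Ici_if_deriv_antimono:
  fixes f g :: "real \<Rightarrow> real"
  assumes cont: "continuous_on {a..} f"
    and deriv: "\<And>x. a < x \<Longrightarrow> (f has_real_derivative g x) (at x)"
    and antimono: "\<And>x y. a < x \<Longrightarrow> x \<le> y \<Longrightarrow> g y \<le> g x"
  shows "concave_on {a..} f"
proof (rule concave_on_linorderI)
  fix t x y :: real
  assume t: "0 < t" "t < 1" and xy: "x \<in> {a..}" "y \<in> {a..}" "x < y"
  define z where "z = (1 - t) * x + t * y"
  have zx: "z - x = t * (y - x)" and yz: "y - z = (1 - t) * (y - x)"
    by (simp_all add: z_def algebra_simps)
  have "0 < t * (y - x)" "0 < (1 - t) * (y - x)" using t xy by simp_all
  then have "x < z" "z < y" by (simp_all flip: zx yz)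
  have differentiable: "f differentiable (at u)" if "a < u" for u
    using deriv[OF that] real_differentiable_def by blast
  obtain \<xi> l where \<xi>: "x < \<xi>" "\<xi> < z" "(f has_real_derivative l) (at \<xi>)" "f z - f x = (z - x) * l"
    using MVT[OF \<open>x < z\<close> continuous_on_subset[OF cont]] xy differentiable by fastforce
  obtain \<eta> m where \<eta>: "z < \<eta>" "\<eta> < y" "(f has_real_derivative m) (at \<eta>)" "f y - f z = (y - z) * m"
    using MVT[OF \<open>z < y\<close> continuous_on_subset[OF cont]] xy \<open>x < z\<close> differentiable by fastforce
  have "a < \<xi>" "a < \<eta>" using xy \<xi> \<eta> by simp_all
  then have "l = g \<xi>" "m = g \<eta>"
    using DERIV_unique[OF \<xi>(3) deriv] DERIV_unique[OF \<eta>(3) deriv] by blast+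
  then have "m \<le> l" using antimono[OF \<open>a < \<xi>\<close>, of \<eta>] \<xi> \<eta> by simp
  have "t * (f y - f z) = (t * (1 - t) * (y - x)) * m"
    and "(1 - t) * (f z - f x) = (t * (1 - t) * (y - x)) * l"
    unfolding \<xi>(4) \<eta>(4) zx yz by (simp_all add: ac_simps)
  moreover have "0 \<le> t * (1 - t) * (y - x)" using t xy by simp
  ultimately have "t * (f y - f z) \<le> (1 - t) * (f z - f x)"
    using \<open>m \<le> l\<close> by (metis mult_left_mono)
  moreover have "(1 - t) *\<^sub>R x + t *\<^sub>R y = z" by (simp add: z_def)
  ultimately show "(1 - t) * f x + t * f y \<le> f ((1 - t) *\<^sub>R x + t *\<^sub>R y)"
    by (simp add: algebra_simps)
qed (rule convex_real_interval)

lemma concave_on_imp_antimono_div: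
  fixes f :: "real \<Rightarrow> real"
  assumes "concave_on {0..} f" "f 0 = 0"
  shows "antimono_on {0<..} (\<lambda>t. f t / t)"
proof (rule monotone_onI)
  fix x y :: real
  assume xy: "x \<in> {0<..}" "y \<in> {0<..}" "x \<le> y"
  have "(1 - x / y) * f 0 + (x / y) * f y \<le> f ((1 - x / y) *\<^sub>R 0 + (x / y) *\<^sub>R y)"
    by (rule concave_onD[OF assms(1)]) (use xy in auto)
  then have "(x / y) * f y \<le> f x" using assms(2) xy by simp
  then show "f y / y \<le> f x / x" using xy by (simp add: field_simps)
qed

lemma eventually_at_right_0_imp_interval:
  fixes P :: "real \<Rightarrow> bool"
  assumes "eventually P (at_right 0)"
  shows "\<exists>t1. 0 < t1 \<and> t1 < 1 \<and> (\<forall>t\<in>{0<..<t1}. P t)"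
proof -
  obtain b where "b > 0" "\<And>t. 0 < t \<Longrightarrow> t < b \<Longrightarrow> P t"
    using assms unfolding eventually_at_right_field by blast
  then show ?thesis by (intro exI[of _ "min b (1/2)"]) auto
qed

definition zeta_density :: "(real \<Rightarrow> real) \<Rightarrow> real \<Rightarrow> real" where
  "zeta_density \<rho> t = \<rho> t / ((1 + \<rho> t) * t)"

definition zeta_of :: "(real \<Rightarrow> real) \<Rightarrow> real \<Rightarrow> real" where
  "zeta_of \<rho> t = integral {0..t} (zeta_density \<rho>)"

definition zeta_density_deriv :: "(real \<Rightarrow> real) \<Rightarrow> (real \<Rightarrow> real) \<Rightarrow> real \<Rightarrow> real" where
  "zeta_density_deriv \<rho> \<rho>' t = \<rho>' t / ((1 + \<rho> t)\<^sup>2 * t) - \<rho> t / ((1 + \<rho> t) * t\<^sup>2)"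

definition zeta_density_deriv2 ::
    "(real \<Rightarrow> real) \<Rightarrow> (real \<Rightarrow> real) \<Rightarrow> (real \<Rightarrow> real) \<Rightarrow> real \<Rightarrow> real" where
  "zeta_density_deriv2 \<rho> \<rho>' \<rho>'' t =
     (- 2 * (\<rho>' t)\<^sup>2 / (1 + \<rho> t) ^ 3 + \<rho>'' t / (1 + \<rho> t)\<^sup>2) / t
     - 2 * \<rho>' t / ((1 + \<rho> t)\<^sup>2 * t\<^sup>2) + 2 * \<rho> t / ((1 + \<rho> t) * t ^ 3)"

lemma zeta_density_deriv2_numerator_lower:
  fixes r x y :: real
  assumes r: "0 \<le> r" and x: "0 \<le> x" "x \<le> r" and y: "- 4 * r \<le> y"
  shows "- 6 * r * (1 + r)\<^sup>2 \<le> - 2 * x\<^sup>2 + y * (1 + r) - 2 * x * (1 + r) + 2 * r * (1 + r)\<^sup>2"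
proof -
  have "1 + r \<le> (1 + r)\<^sup>2" using r by (simp add: power2_eq_square)
  then have r_le: "r \<le> (1 + r)\<^sup>2" by linarith
  have "x\<^sup>2 \<le> r * r" using x by (simp add: power2_eq_square mult_mono)
  also have "\<dots> \<le> r * (1 + r)\<^sup>2" using r_le r by (rule mult_left_mono)
  finally have "x\<^sup>2 \<le> r * (1 + r)\<^sup>2" .
  moreover have "x * (1 + r) \<le> r * (1 + r)\<^sup>2"
  proof -
    have "x * (1 + r) \<le> r * (1 + r)" using x r by (intro mult_right_mono) auto
    also have "\<dots> \<le> r * (1 + r)\<^sup>2" using \<open>1 + r \<le> (1 + r)\<^sup>2\<close> r by (rule mult_left_mono)
    finally show ?thesis .
  qed
  moreover have "- 4 * r * (1 + r)\<^sup>2 \<le> y * (1 + r)"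
  proof -
    have "- 4 * r * (1 + r)\<^sup>2 \<le> - 4 * r * (1 + r)"
      using r \<open>1 + r \<le> (1 + r)\<^sup>2\<close> by (simp add: mult_left_mono)
    also have "\<dots> \<le> y * (1 + r)" using y r by (intro mult_right_mono) auto
    finally show ?thesis .
  qed
  ultimately show ?thesis by linarith
qed

locale zeta_generator =
  fixes \<rho> \<rho>' \<rho>'' :: "real \<Rightarrow> real"
  assumes continuous: "continuous_on {0..} \<rho>"
    and at_0: "\<rho> 0 = 0"
    and integrable: "(\<lambda>u. \<rho> u / u) integrable_on {0..1}"
    and has_deriv: "\<And>t. 0 < t \<Longrightarrow> (\<rho> has_real_derivative \<rho>' t) (at t)"
    and has_deriv2: "\<And>t. 0 < t \<Longrightarrow> (\<rho>' has_real_derivative \<rho>'' t) (at t)"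
    and continuous_deriv2: "continuous_on {0<..} \<rho>''"
    and deriv_nonneg: "\<And>t. 0 < t \<Longrightarrow> 0 \<le> \<rho>' t"
    and deriv_le: "\<And>t. 0 < t \<Longrightarrow> t * \<rho>' t \<le> \<rho> t"
    and deriv2_lower: "\<forall>\<^sub>F t in at_right 0. - 4 * \<rho> t \<le> t\<^sup>2 * \<rho>'' t"
begin

lemma mono_on_rho: "mono_on {0..} \<rho>"
  by (rule mono_on_Ici_if_deriv_nonneg[OF continuous has_deriv deriv_nonneg])

lemma rho_nonneg: "0 \<le> t \<Longrightarrow> 0 \<le> \<rho> t"
  using mono_onD[OF mono_on_rho, of 0 t] at_0 by simp

lemma zeta_density_nonneg: "0 < t \<Longrightarrow> 0 \<le> zeta_density \<rho> t"
  unfolding zeta_density_def using rho_nonneg[of t] by simp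

lemma zeta_density_integrable_on_unit: "zeta_density \<rho> integrable_on {0..1}"
proof -
  have "negligible (({0..1} - {0<..1}) \<union> ({0<..1} - {0..1::real}))"
    by (rule negligible_subset[of "{0}"]) auto
  note spike = integrable_spike_set_eq[OF this]
  have "continuous_on {0<..1} \<rho>" using continuous by (rule continuous_on_subset) auto
  moreover have "(1 + \<rho> x) * x \<noteq> 0" if "x \<in> {0<..1}" for x
    using rho_nonneg[of x] that by auto
  ultimately have cont: "continuous_on {0<..1} (zeta_density \<rho>)"
    unfolding zeta_density_def by (intro continuous_intros) auto
  have "zeta_density \<rho> integrable_on {0<..1}"
  proof (rule measurable_bounded_by_integrable_imp_integrable)
    show "zeta_density \<rho> \<in> borel_measurable (lebesgue_on {0<..1})"
      by (rule continuous_imp_measurable_on_sets_lebesgue[OF cont]) auto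
    show "(\<lambda>u. \<rho> u / u) integrable_on {0<..1}" using integrable spike by blast
    show "norm (zeta_density \<rho> x) \<le> \<rho> x / x" if "x \<in> {0<..1}" for x
      using that rho_nonneg[of x] zeta_density_nonneg[of x]
      by (auto simp: zeta_density_def divide_simps algebra_simps)
  qed auto
  then show ?thesis using spike by blast
qed

lemma zeta_density_integrable_on:
  assumes "0 \<le> b"
  shows "zeta_density \<rho> integrable_on {0..b}"
proof (cases "b \<le> 1")
  case True
  then show ?thesis
    using integrable_on_subinterval[OF zeta_density_integrable_on_unit] assms by auto
next
  case False
  have "continuous_on {1..b} \<rho>" using continuous by (rule continuous_on_subset) auto
  moreover have "(1 + \<rho> x) * x \<noteq> 0" if "x \<in> {1..b}" for x
    using rho_nonneg[of x] that by auto
  ultimately have "zeta_density \<rho> integrable_on {1..b}"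
    unfolding zeta_density_def by (intro integrable_continuous_real continuous_intros) auto
  then show ?thesis
    using Henstock_Kurzweil_Integration.integrable_combine[OF _ _ zeta_density_integrable_on_unit]
      False by simp
qed

lemma zeta_of_has_derivative:
  assumes t: "0 < t"
  shows "(zeta_of \<rho> has_real_derivative zeta_density \<rho> t) (at t)"
proof -
  have "isCont \<rho> t" using continuous t by (intro continuous_on_interior[of "{0..}"]) auto
  moreover have "(1 + \<rho> t) * t \<noteq> 0" using rho_nonneg[of t] t by auto
  ultimately have cont: "isCont (zeta_density \<rho>) t"
    unfolding zeta_density_def by (intro continuous_intros) auto
  have "(zeta_of \<rho> has_vector_derivative zeta_density \<rho> t) (at t within {0..t + 1} - {})"
    unfolding zeta_of_def[abs_def]
    by (rule integral_has_vector_derivative_continuous_at[OF zeta_density_integrable_on])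
       (use t continuous_at_imp_continuous_within[OF cont] in auto)
  moreover have "at t within {0..t + 1} - {} = at t"
    unfolding Diff_empty by (rule at_within_interior) (use t in auto)
  ultimately show ?thesis
    by (simp add: has_real_derivative_iff_has_vector_derivative)
qed

lemma zeta_density_has_derivative:
  assumes t: "0 < t"
  shows "(zeta_density \<rho> has_real_derivative zeta_density_deriv \<rho> \<rho>' t) (at t)"
proof -
  have nz: "1 + \<rho> t \<noteq> 0" "t \<noteq> 0" using rho_nonneg[of t] t by auto
  show ?thesis
    unfolding zeta_density_def[abs_def] zeta_density_deriv_def
    by (rule derivative_eq_intros has_deriv[OF t] refl | simp add: nz)+
       (simp add: nz divide_simps power2_eq_square, simp add: algebra_simps)
qed

lemma zeta_density_deriv_has_derivative:
  assumes t: "0 < t"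
  shows "(zeta_density_deriv \<rho> \<rho>' has_real_derivative zeta_density_deriv2 \<rho> \<rho>' \<rho>'' t) (at t)"
proof -
  have nz: "1 + \<rho> t \<noteq> 0" "t \<noteq> 0" using rho_nonneg[of t] t by auto
  show ?thesis
    unfolding zeta_density_deriv_def[abs_def] zeta_density_deriv2_def
    by (rule derivative_eq_intros has_deriv[OF t] has_deriv2[OF t] refl | simp add: nz)+
       (simp add: nz divide_simps power2_eq_square power3_eq_cube, simp add: algebra_simps)
qed

lemma continuous_on_zeta_density_deriv2: "continuous_on {0<..} (zeta_density_deriv2 \<rho> \<rho>' \<rho>'')"
proof -
  have "continuous_on {0<..} \<rho>" using continuous by (rule continuous_on_subset) auto
  moreover have "continuous_on {0<..} \<rho>'"
    using has_deriv2 by (intro continuous_at_imp_continuous_on) (auto intro: DERIV_isCont)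
  moreover have "1 + \<rho> t \<noteq> 0" if "0 < t" for t using rho_nonneg[of t] that by auto
  ultimately show ?thesis
    unfolding zeta_density_deriv2_def[abs_def]
    by (intro continuous_intros continuous_deriv2) auto
qed

lemma
  shows Ck_on_zeta_of: "Ck_on 3 (zeta_of \<rho>) {0<..}"
    and deriv3_zeta_of: "0 < t \<Longrightarrow> (deriv ^^ 3) (zeta_of \<rho>) t = zeta_density_deriv2 \<rho> \<rho>' \<rho>'' t"
proof -
  define F where "F j = [zeta_of \<rho>, zeta_density \<rho>, zeta_density_deriv \<rho> \<rho>', zeta_density_deriv2 \<rho> \<rho>' \<rho>''] ! j"
    for j
  have "(F j has_real_derivative F (Suc j) x) (at x)" if "j < 3" "x \<in> {0<..}" for j x
  proof -
    have "j = 0 \<or> j = 1 \<or> j = 2" using \<open>j < 3\<close> by auto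
    then show ?thesis
      using that zeta_of_has_derivative zeta_density_has_derivative zeta_density_deriv_has_derivative
      by (auto simp: F_def)
  qed
  moreover have "continuous_on {0<..} (F 3)"
    using continuous_on_zeta_density_deriv2 by (simp add: F_def)
  ultimately show "Ck_on 3 (zeta_of \<rho>) {0<..}"
    and "0 < t \<Longrightarrow> (deriv ^^ 3) (zeta_of \<rho>) t = zeta_density_deriv2 \<rho> \<rho>' \<rho>'' t"
    using Ck_onI_derivatives[of "{0<..}" F] deriv_funpow_eq_derivatives[of "{0<..}" F, of _ 3 3 t]
    by (simp_all add: F_def)
qed

lemma deriv_zeta_of: "0 < t \<Longrightarrow> deriv (zeta_of \<rho>) t = zeta_density \<rho> t"
  by (rule DERIV_imp_deriv[OF zeta_of_has_derivative])

lemma zeta_of_0 [simp]: "zeta_of \<rho> 0 = 0"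
  by (simp add: zeta_of_def)

lemma continuous_on_zeta_of: "continuous_on {0..} (zeta_of \<rho>)"
proof -
  have "continuous_on {0..1} (zeta_of \<rho>)"
    unfolding zeta_of_def[abs_def]
    by (rule indefinite_integral_continuous_1[OF zeta_density_integrable_on_unit])
  moreover have "continuous_on {1..} (zeta_of \<rho>)"
    by (intro continuous_at_imp_continuous_on ballI DERIV_isCont[OF zeta_of_has_derivative]) auto
  ultimately have "continuous_on ({0..1} \<union> {1..}) (zeta_of \<rho>)"
    by (intro continuous_on_closed_Un) auto
  moreover have "{0..1} \<union> {1..} = {0::real..}" by auto
  ultimately show ?thesis by simp
qed

lemma mono_zeta_of: "mono_on {0..} (zeta_of \<rho>)"
  by (rule mono_on_Ici_if_deriv_nonneg[OF continuous_on_zeta_of zeta_of_has_derivative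
        zeta_density_nonneg])

lemma zeta_of_nonneg: "0 \<le> t \<Longrightarrow> 0 \<le> zeta_of \<rho> t"
  using mono_onD[OF mono_zeta_of, of 0 t] by simp

lemma zeta_of_pos:
  assumes pos: "\<And>u. 0 < u \<Longrightarrow> 0 < \<rho> u" and t: "0 < t"
  shows "0 < zeta_of \<rho> t"
proof -
  obtain l z where "0 < z" "(zeta_of \<rho> has_real_derivative l) (at z)"
      "zeta_of \<rho> t - zeta_of \<rho> 0 = (t - 0) * l"
    using MVT[OF t continuous_on_subset[OF continuous_on_zeta_of]] zeta_of_has_derivative
    by (force simp: real_differentiable_def)
  moreover from this have "l = zeta_density \<rho> z"
    using DERIV_unique zeta_of_has_derivative by blast
  ultimately have "0 < z" "zeta_of \<rho> t = t * zeta_density \<rho> z" by simp_all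
  moreover have "0 < zeta_density \<rho> z"
    unfolding zeta_density_def using pos[OF \<open>0 < z\<close>] \<open>0 < z\<close> by simp
  ultimately show ?thesis using t by simp
qed

lemma zeta_density_deriv_nonpos:
  assumes t: "0 < t"
  shows "zeta_density_deriv \<rho> \<rho>' t \<le> 0"
proof -
  have r: "0 \<le> \<rho> t" using rho_nonneg t by simp
  have "\<rho>' t / ((1 + \<rho> t)\<^sup>2 * t) = t * \<rho>' t / ((1 + \<rho> t)\<^sup>2 * t\<^sup>2)"
    using t by (simp add: power2_eq_square)
  also have "\<dots> \<le> \<rho> t / ((1 + \<rho> t)\<^sup>2 * t\<^sup>2)"
    using deriv_le[OF t] t by (intro divide_right_mono) auto
  also have "\<dots> \<le> \<rho> t / ((1 + \<rho> t) * t\<^sup>2)"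
    using r t by (intro divide_left_mono) (auto simp: power2_eq_square mult_right_mono)
  finally show ?thesis unfolding zeta_density_deriv_def by simp
qed

lemma zeta_density_antimono:
  assumes "0 < x" "x \<le> y"
  shows "zeta_density \<rho> y \<le> zeta_density \<rho> x"
proof (rule DERIV_nonpos_imp_decreasing_open[OF \<open>x \<le> y\<close>])
  show "continuous_on {x..y} (zeta_density \<rho>)"
    using assms
    by (intro continuous_at_imp_continuous_on ballI DERIV_isCont[OF zeta_density_has_derivative])
      auto
  fix u assume "x < u" "u < y"
  then have "0 < u" using assms by simp
  then show "\<exists>d. (zeta_density \<rho> has_real_derivative d) (at u) \<and> d \<le> 0"
    using zeta_density_has_derivative zeta_density_deriv_nonpos by blast
qed

lemma concave_zeta_of: "concave_on {0..} (zeta_of \<rho>)"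
  by (rule concave_on_Ici_if_deriv_antimono[OF continuous_on_zeta_of zeta_of_has_derivative
        zeta_density_antimono])

lemma t_deriv_zeta_of: "0 < t \<Longrightarrow> t * deriv (zeta_of \<rho>) t = \<rho> t / (1 + \<rho> t)"
  by (simp add: deriv_zeta_of zeta_density_def)

lemma mono_t_deriv_zeta_of: "mono_on {0<..} (\<lambda>t. t * deriv (zeta_of \<rho>) t)"
proof (rule mono_onI)
  fix x y :: real
  assume xy: "x \<in> {0<..}" "y \<in> {0<..}" "x \<le> y"
  have "\<rho> x \<le> \<rho> y" using mono_onD[OF mono_on_rho] xy by simp
  moreover have "0 \<le> \<rho> x" using rho_nonneg xy by simp
  ultimately have "\<rho> x / (1 + \<rho> x) \<le> \<rho> y / (1 + \<rho> y)"
    by (simp add: divide_simps algebra_simps)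
  then show "x * deriv (zeta_of \<rho>) x \<le> y * deriv (zeta_of \<rho>) y"
    using xy by (simp add: t_deriv_zeta_of)
qed

lemma zeta_density_deriv2_lower:
  assumes t: "0 < t" and lower: "- 4 * \<rho> t \<le> t\<^sup>2 * \<rho>'' t"
  shows "- 6 * zeta_density \<rho> t \<le> t\<^sup>2 * zeta_density_deriv2 \<rho> \<rho>' \<rho>'' t"
proof -
  define r where "r = \<rho> t"
  define x where "x = t * \<rho>' t"
  define y where "y = t\<^sup>2 * \<rho>'' t"
  have r: "0 \<le> r" and x: "0 \<le> x" "x \<le> r" and y: "- 4 * r \<le> y"
    using rho_nonneg[of t] deriv_nonneg[OF t] deriv_le[OF t] lower t
    by (simp_all add: r_def x_def y_def)
  have nz: "1 + r \<noteq> 0" "t \<noteq> 0" using r t by auto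
  have eq2: "t\<^sup>2 * zeta_density_deriv2 \<rho> \<rho>' \<rho>'' t
      = (- 2 * x\<^sup>2 + y * (1 + r) - 2 * x * (1 + r) + 2 * r * (1 + r)\<^sup>2) / ((1 + r) ^ 3 * t)"
    using nz unfolding zeta_density_deriv2_def r_def x_def y_def
    by (simp add: divide_simps power2_eq_square power3_eq_cube) (simp add: algebra_simps)
  have eq1: "- 6 * zeta_density \<rho> t = (- 6 * r * (1 + r)\<^sup>2) / ((1 + r) ^ 3 * t)"
    using nz unfolding zeta_density_def r_def
    by (simp add: divide_simps power2_eq_square power3_eq_cube)
  show ?thesis
    unfolding eq1 eq2
    by (rule divide_right_mono[OF zeta_density_deriv2_numerator_lower[OF r x y]]) (use r t in simp)
qed

lemma eventually_third_deriv_zeta_of_lower: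
  "\<forall>\<^sub>F t in at_right 0. - 6 * deriv (zeta_of \<rho>) t \<le> t\<^sup>2 * (deriv ^^ 3) (zeta_of \<rho>) t"
  using deriv2_lower eventually_at_right_less[of 0]
proof eventually_elim
  case (elim t)
  then show ?case using zeta_density_deriv2_lower[of t] by (simp add: deriv_zeta_of deriv3_zeta_of)
qed

lemma zeta_of_le_ln:
  assumes "1 \<le> t"
  shows "zeta_of \<rho> t \<le> zeta_of \<rho> 1 + ln t"
proof -
  have "ln 1 - zeta_of \<rho> 1 \<le> ln t - zeta_of \<rho> t"
  proof (rule DERIV_nonneg_imp_increasing_open[OF assms])
    show "continuous_on {1..t} (\<lambda>u. ln u - zeta_of \<rho> u)"
      using continuous_on_subset[OF continuous_on_zeta_of, of "{1..t}"]
      by (intro continuous_intros) auto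
    fix u assume u: "1 < u" "u < t"
    have "((\<lambda>u. ln u - zeta_of \<rho> u) has_real_derivative 1 / u - zeta_density \<rho> u) (at u)"
      using u by (intro DERIV_diff DERIV_ln_divide zeta_of_has_derivative) auto
    moreover have "zeta_density \<rho> u \<le> 1 / u"
      unfolding zeta_density_def using u rho_nonneg[of u] by (simp add: divide_simps)
    ultimately show "\<exists>d. ((\<lambda>u. ln u - zeta_of \<rho> u) has_real_derivative d) (at u) \<and> 0 \<le> d"
      by fastforce
  qed
  then show ?thesis by simp
qed

lemma zeta_of_le_powr:
  assumes a: "0 < a"
  shows "\<exists>c>0. \<forall>t\<ge>0. zeta_of \<rho> t \<le> c * (1 + t) powr a"
proof (intro exI conjI allI impI)
  show "0 < zeta_of \<rho> 1 + 1 / a" by (intro add_nonneg_pos zeta_of_nonneg) (use a in auto)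
  fix t :: real assume t: "0 \<le> t"
  have "zeta_of \<rho> t \<le> zeta_of \<rho> 1 + ln (1 + t)"
  proof (cases "t \<le> 1")
    case True
    then have "zeta_of \<rho> t \<le> zeta_of \<rho> 1" using mono_onD[OF mono_zeta_of, of t 1] t by simp
    moreover have "0 \<le> ln (1 + t)" using t by simp
    ultimately show ?thesis by linarith
  next
    case False
    then have "zeta_of \<rho> t \<le> zeta_of \<rho> 1 + ln t" by (intro zeta_of_le_ln) simp
    moreover have "ln t \<le> ln (1 + t)" using False by simp
    ultimately show ?thesis by linarith
  qed
  also have "\<dots> \<le> zeta_of \<rho> 1 * (1 + t) powr a + (1 + t) powr a / a"
  proof (rule add_mono)
    show "zeta_of \<rho> 1 \<le> zeta_of \<rho> 1 * (1 + t) powr a"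
      using zeta_of_nonneg[of 1] ge_one_powr_ge_zero[of "1 + t" a] t a
      by (simp add: mult_le_cancel_left1)
  qed (use ln_powr_bound[of "1 + t" a] t a in simp)
  finally show "zeta_of \<rho> t \<le> (zeta_of \<rho> 1 + 1 / a) * (1 + t) powr a"
    by (simp add: algebra_simps)
qed

lemma eventually_half_le_t_deriv_zeta_of:
  "\<forall>\<^sub>F t in at_right 0. \<rho> t / 2 \<le> t * deriv (zeta_of \<rho>) t"
proof -
  have "(\<rho> \<longlongrightarrow> 0) (at_right 0)"
    using continuous unfolding continuous_on_def
    by (metis at_0 at_within_Ici_at_right atLeast_iff order_refl)
  then have "\<forall>\<^sub>F t in at_right 0. \<rho> t < 1"
    by (rule order_tendstoD) simp
  with eventually_at_right_less[of 0] show ?thesis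
  proof eventually_elim
    case (elim t)
    then have "\<rho> t / 2 \<le> \<rho> t / (1 + \<rho> t)" using rho_nonneg[of t] by (intro divide_left_mono) auto
    then show ?case using elim by (simp add: t_deriv_zeta_of)
  qed
qed

end

lemma zeta_generator_add:
  assumes "zeta_generator \<rho> \<rho>' \<rho>''" "zeta_generator \<sigma> \<sigma>' \<sigma>''"
  shows "zeta_generator (\<lambda>t. \<rho> t + \<sigma> t) (\<lambda>t. \<rho>' t + \<sigma>' t) (\<lambda>t. \<rho>'' t + \<sigma>'' t)"
proof -
  interpret R: zeta_generator \<rho> \<rho>' \<rho>'' by fact
  interpret S: zeta_generator \<sigma> \<sigma>' \<sigma>'' by fact
  show ?thesis
  proof
    show "continuous_on {0..} (\<lambda>t. \<rho> t + \<sigma> t)"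
      by (rule continuous_on_add[OF R.continuous S.continuous])
    show "\<rho> 0 + \<sigma> 0 = 0" by (simp add: R.at_0 S.at_0)
    show "(\<lambda>u. (\<rho> u + \<sigma> u) / u) integrable_on {0..1}"
      using integrable_add[OF R.integrable S.integrable] by (simp add: add_divide_distrib)
    show "continuous_on {0<..} (\<lambda>t. \<rho>'' t + \<sigma>'' t)"
      by (rule continuous_on_add[OF R.continuous_deriv2 S.continuous_deriv2])
    show "\<forall>\<^sub>F t in at_right 0. - 4 * (\<rho> t + \<sigma> t) \<le> t\<^sup>2 * (\<rho>'' t + \<sigma>'' t)"
      using R.deriv2_lower S.deriv2_lower by eventually_elim (simp add: algebra_simps)
    fix t :: real assume t: "0 < t"
    show "((\<lambda>t. \<rho> t + \<sigma> t) has_real_derivative \<rho>' t + \<sigma>' t) (at t)"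
      by (rule DERIV_add[OF R.has_deriv[OF t] S.has_deriv[OF t]])
    show "((\<lambda>t. \<rho>' t + \<sigma>' t) has_real_derivative \<rho>'' t + \<sigma>'' t) (at t)"
      by (rule DERIV_add[OF R.has_deriv2[OF t] S.has_deriv2[OF t]])
    show "0 \<le> \<rho>' t + \<sigma>' t" using R.deriv_nonneg[OF t] S.deriv_nonneg[OF t] by simp
    show "t * (\<rho>' t + \<sigma>' t) \<le> \<rho> t + \<sigma> t"
      using R.deriv_le[OF t] S.deriv_le[OF t] by (simp add: distrib_left)
  qed
qed

lemma zeta_generator_scale:
  assumes c: "0 \<le> c" and "zeta_generator \<rho> \<rho>' \<rho>''"
  shows "zeta_generator (\<lambda>t. c * \<rho> t) (\<lambda>t. c * \<rho>' t) (\<lambda>t. c * \<rho>'' t)"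
proof -
  interpret zeta_generator \<rho> \<rho>' \<rho>'' by fact
  show ?thesis
  proof
    show "continuous_on {0..} (\<lambda>t. c * \<rho> t)" by (intro continuous_intros continuous)
    show "c * \<rho> 0 = 0" by (simp add: at_0)
    show "(\<lambda>u. c * \<rho> u / u) integrable_on {0..1}"
      using integrable_on_cmult_right[OF integrable, of c] by (simp add: mult.commute)
    show "continuous_on {0<..} (\<lambda>t. c * \<rho>'' t)" by (intro continuous_intros continuous_deriv2)
    show "\<forall>\<^sub>F t in at_right 0. - 4 * (c * \<rho> t) \<le> t\<^sup>2 * (c * \<rho>'' t)"
      using deriv2_lower
    proof eventually_elim
      case (elim t)
      then have "c * (- 4 * \<rho> t) \<le> c * (t\<^sup>2 * \<rho>'' t)" using c by (rule mult_left_mono)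
      then show ?case by (simp add: algebra_simps)
    qed
    fix t :: real assume t: "0 < t"
    show "((\<lambda>t. c * \<rho> t) has_real_derivative c * \<rho>' t) (at t)"
      by (rule DERIV_cmult[OF has_deriv[OF t]])
    show "((\<lambda>t. c * \<rho>' t) has_real_derivative c * \<rho>'' t) (at t)"
      by (rule DERIV_cmult[OF has_deriv2[OF t]])
    show "0 \<le> c * \<rho>' t" using c deriv_nonneg[OF t] by simp
    show "t * (c * \<rho>' t) \<le> c * \<rho> t"
      using mult_left_mono[OF deriv_le[OF t] c] by (simp add: algebra_simps)
  qed
qed

lemma zeta_generator_powr:
  fixes s :: real
  assumes s: "0 < s" "s \<le> 1"
  shows "zeta_generator (\<lambda>t. t powr s) (\<lambda>t. s * t powr (s - 1)) (\<lambda>t. s * (s - 1) * t powr (s - 2))"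
proof
  show "continuous_on {0..} (\<lambda>t. t powr s)"
    using s by (intro continuous_on_powr' continuous_on_id continuous_on_const) auto
  show "0 powr s = 0" by simp
  show "(\<lambda>u. u powr s / u) integrable_on {0..1}"
  proof (rule integrable_eq)
    show "(\<lambda>u. u powr (s - 1)) integrable_on {0..1}"
      by (rule integrable_on_powr_from_0) (use s in auto)
    show "x powr (s - 1) = x powr s / x" if "x \<in> {0..1}" for x
      using that by (cases "x = 0") (simp_all add: powr_diff)
  qed
  show "continuous_on {0<..} (\<lambda>t. s * (s - 1) * t powr (s - 2))"
    by (intro continuous_on_powr' continuous_on_mult continuous_on_id continuous_on_const) auto
  show "\<forall>\<^sub>F t in at_right 0. - 4 * t powr s \<le> t\<^sup>2 * (s * (s - 1) * t powr (s - 2))"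
    using eventually_at_right_less[of 0]
  proof eventually_elim
    case (elim t)
    have "t powr s = t powr (s - 2) * t powr 2" by (simp flip: powr_add)
    then have eq: "t\<^sup>2 * (s * (s - 1) * t powr (s - 2)) = s * (s - 1) * t powr s"
      using elim by simp
    have "s * (s - 1) = (s - 1)\<^sup>2 + (s - 1)" by (simp add: power2_eq_square algebra_simps)
    then have "- 4 \<le> s * (s - 1)" using s zero_le_power2[of "s - 1"] by linarith
    then have "- 4 * t powr s \<le> s * (s - 1) * t powr s" by (rule mult_right_mono) simp
    then show ?case unfolding eq .
  qed
  fix t :: real assume t: "0 < t"
  show "((\<lambda>t. t powr s) has_real_derivative s * t powr (s - 1)) (at t)"
    using has_real_derivative_powr[OF t] by (simp add: mult.commute)
  show "((\<lambda>t. s * t powr (s - 1)) has_real_derivative s * (s - 1) * t powr (s - 2)) (at t)"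
    using DERIV_cmult[OF has_real_derivative_powr[OF t, of "s - 1"], of s] by (simp add: mult.assoc)
  show "0 \<le> s * t powr (s - 1)" using s by simp
  have "t * t powr (s - 1) = t powr s" using t by (simp add: powr_mult_base)
  then show "t * (s * t powr (s - 1)) \<le> t powr s"
    using s by (simp add: mult.left_commute mult_left_le_one_le)
qed

lemma zeta_generator_cond_M:
  assumes "cond_M \<iota> \<omega>"
  shows "zeta_generator \<omega> (deriv \<omega>) (deriv (deriv \<omega>))"
proof -
  have cont: "continuous_on {0..} \<omega>" and mono: "mono_on {0..} \<omega>"
    and concave: "concave_on {0..} \<omega>" and C2: "Ck_on 2 \<omega> {0<..}" and at_0: "\<omega> 0 = 0"
    and integrable: "(\<lambda>t. \<omega> t / t) integrable_on {0..1}"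
    and lower: "\<exists>t0>0. \<forall>t\<in>{0<..<t0}. - \<omega> t - 3 * t * deriv \<omega> t \<le> t\<^sup>2 * deriv (deriv \<omega>) t"
    using assms unfolding cond_M_def by blast+
  have C2_deriv: "((deriv ^^ j) \<omega> has_real_derivative (deriv ^^ Suc j) \<omega> t) (at t)"
    if "j < 2" "0 < t" for j t
    using C2 that unfolding Ck_on_def by simp
  have has_deriv: "(\<omega> has_real_derivative deriv \<omega> t) (at t)" if "0 < t" for t
    using C2_deriv[of 0 t] that by simp
  have has_deriv2: "(deriv \<omega> has_real_derivative deriv (deriv \<omega>) t) (at t)" if "0 < t" for t
    using C2_deriv[of 1 t] that by simp
  have deriv_nonneg: "0 \<le> deriv \<omega> t" if t: "0 < t" for t
  proof (rule ccontr)
    assume "\<not> 0 \<le> deriv \<omega> t"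
    then obtain d where d: "0 < d" "\<And>h. 0 < h \<Longrightarrow> h < d \<Longrightarrow> \<omega> (t + h) < \<omega> t"
      using DERIV_neg_dec_right[OF has_deriv[OF t]] by auto
    have "\<omega> t \<le> \<omega> (t + d / 2)" using d t by (intro mono_onD[OF mono]) auto
    moreover have "\<omega> (t + d / 2) < \<omega> t" using d by simp
    ultimately show False by simp
  qed
  \<comment> \<open>tangent line of the concave function \<omega> at t, evaluated at 0\<close>
  have deriv_le: "t * deriv \<omega> t \<le> \<omega> t" if "0 < t" for t
  proof -
    have convex: "convex_on {0..} (\<lambda>x. - \<omega> x)" using concave unfolding concave_on_def .
    have "(- deriv \<omega> t) * (0 - t) \<le> (\<lambda>x. - \<omega> x) 0 - (\<lambda>x. - \<omega> x) t"
    proof (rule convex_on_imp_above_tangent[OF convex])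
      show "((\<lambda>x. - \<omega> x) has_real_derivative - deriv \<omega> t) (at t within {0..})"
        by (rule has_field_derivative_at_within[OF DERIV_minus[OF has_deriv[OF that]]])
      show "connected {0::real..}" by (simp add: is_interval_connected)
      show "t \<in> interior {0..}" "0 \<in> {0::real..}" using that by simp_all
    qed
    then show ?thesis using at_0 by (simp add: mult.commute)
  qed
  have "\<forall>\<^sub>F t in at_right 0. - \<omega> t - 3 * t * deriv \<omega> t \<le> t\<^sup>2 * deriv (deriv \<omega>) t"
    using lower unfolding eventually_at_right_field by auto
  then have lower': "\<forall>\<^sub>F t in at_right 0. - 4 * \<omega> t \<le> t\<^sup>2 * deriv (deriv \<omega>) t"
    using eventually_at_right_less[of 0]
  proof eventually_elim
    case (elim t)
    then show ?case using deriv_le[of t] by linarith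
  qed
  have "continuous_on {0<..} (deriv (deriv \<omega>))"
    using C2 unfolding Ck_on_def by (simp add: numeral_2_eq_2)
  then show ?thesis
    using cont at_0 integrable has_deriv has_deriv2 deriv_nonneg deriv_le lower'
    by unfold_locales
qed

theorem lemma5p6:
  fixes s \<iota> C :: real and \<omega> :: "real \<Rightarrow> real"
  assumes "0 < s" "s < 1"
    and "0 < \<iota>" "\<iota> < min s (1/3)"
    and "cond_M \<iota> \<omega>"
    and "C > 0"
  shows "\<exists>t0 > 0. \<exists>\<zeta> :: real \<Rightarrow> real.
     (\<forall>t\<ge>0. \<zeta> t \<ge> 0) \<and>
     continuous_on {0..} \<zeta> \<and> Ck_on 2 \<zeta> {0<..} \<and> Ck_on 3 \<zeta> {0<..<2} \<and>
     \<comment> \<open>(Z0)\<close>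
     (\<forall>t>0. \<zeta> t > 0) \<and> mono_on {0..} \<zeta> \<and> concave_on {0..} \<zeta> \<and> \<zeta> 0 = 0 \<and>
     \<comment> \<open>(Z1)\<close>
     (\<exists>c1>0. \<exists>t1. 0 < t1 \<and> t1 < 1 \<and>
        (\<forall>t\<in>{0<..<t1}. t\<^sup>2 * (deriv ^^ 3) \<zeta> t \<ge> - c1 * deriv \<zeta> t)) \<and>
     \<comment> \<open>(Z2)\<close>
     mono_on {0<..} (\<lambda>t. t * deriv \<zeta> t) \<and>
     \<comment> \<open>(Z3)\<close>
     (\<exists>\<iota>'>0. \<exists>t3>0. antimono_on {0<..t3} (\<lambda>t. \<zeta> t / t powr \<iota>')) \<and>
     \<comment> \<open>(Z4)\<close>
     (\<exists>c2>0. \<forall>t\<ge>0. \<zeta> t \<le> c2 * (1 + t) powr (s / 2)) \<and>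
     (\<forall>t\<in>{0<..<t0}. C * (t powr s + \<omega> t) \<le> t * deriv \<zeta> t)"
proof -
  note s = assms(1,2) and M = assms(5) and C = assms(6)
  define \<rho> where "\<rho> t = 2 * C * (t powr s + \<omega> t)" for t
  interpret G: zeta_generator \<rho> "\<lambda>t. 2 * C * (s * t powr (s - 1) + deriv \<omega> t)"
      "\<lambda>t. 2 * C * (s * (s - 1) * t powr (s - 2) + deriv (deriv \<omega>) t)"
    unfolding \<rho>_def using s C
    by (intro zeta_generator_scale zeta_generator_add zeta_generator_powr zeta_generator_cond_M[OF M])
      auto
  have \<rho>_pos: "0 < \<rho> u" if "0 < u" for u
    using M that C unfolding cond_M_def \<rho>_def by (simp add: add_pos_nonneg)
  obtain t0 where "0 < t0" and lower: "\<forall>t\<in>{0<..<t0}. \<rho> t / 2 \<le> t * deriv (zeta_of \<rho>) t"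
    using eventually_at_right_0_imp_interval[OF G.eventually_half_le_t_deriv_zeta_of] by blast
  have Z1: "\<exists>c1>0. \<exists>t1. 0 < t1 \<and> t1 < 1 \<and>
      (\<forall>t\<in>{0<..<t1}. t\<^sup>2 * (deriv ^^ 3) (zeta_of \<rho>) t \<ge> - c1 * deriv (zeta_of \<rho>) t)"
    using eventually_at_right_0_imp_interval[OF G.eventually_third_deriv_zeta_of_lower]
    by (metis zero_less_numeral)
  have "antimono_on {0<..1} (\<lambda>t. zeta_of \<rho> t / t powr 1)"
    using concave_on_imp_antimono_div[OF G.concave_zeta_of G.zeta_of_0]
    by (auto simp: monotone_on_def)
  then have Z3: "\<exists>\<iota>'>0. \<exists>t3>0. antimono_on {0<..t3} (\<lambda>t. zeta_of \<rho> t / t powr \<iota>')"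
    by (metis zero_less_one)
  have Z4: "\<exists>c2>0. \<forall>t\<ge>0. zeta_of \<rho> t \<le> c2 * (1 + t) powr (s / 2)"
    using s by (intro G.zeta_of_le_powr) simp
  have lower': "\<forall>t\<in>{0<..<t0}. C * (t powr s + \<omega> t) \<le> t * deriv (zeta_of \<rho>) t"
    using lower by (simp add: \<rho>_def)
  have C2: "Ck_on 2 (zeta_of \<rho>) {0<..}"
    using Ck_on_Suc_imp_Ck_on[of 2] G.Ck_on_zeta_of by simp
  have C3: "Ck_on 3 (zeta_of \<rho>) {0<..<2}"
    by (rule Ck_on_subset[OF G.Ck_on_zeta_of]) auto
  have sign: "\<forall>t>0. 0 < zeta_of \<rho> t" "\<forall>t\<ge>0. 0 \<le> zeta_of \<rho> t"
    using G.zeta_of_pos[OF \<rho>_pos] G.zeta_of_nonneg by auto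
  show ?thesis
    by (rule exI[of _ t0], intro conjI exI[of _ "zeta_of \<rho>"])
      (use \<open>0 < t0\<close> C2 C3 sign G.continuous_on_zeta_of G.mono_zeta_of G.concave_zeta_of
        G.zeta_of_0 Z1 G.mono_t_deriv_zeta_of Z3 Z4 lower' in \<open>simp_all only:\<close>)
qed

end
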